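(* The dcpo $\mathcal Q\mathbb R_\ell$, with its Scott topology, is sober.
   Context: The Sorgenfrey line $\mathbb R_\ell$ is $\mathbb R$ with the topology generated by the half-open intervals $[a,b[$, $a<b$. $\mathcal Q\mathbb R_\ell$ is the set of non-empty compact subsets of $\mathbb R_\ell$ ordered by reverse inclusion; it is a dcpo. A space is sober if every irreducible closed subset is the closure of a unique point. *)

theory Defs
  imports "HOL-Analysis.Analysis"
begin

definition sorgenfrey :: "real topology" where
  "sorgenfrey = topology_generated_by {{a..<b} | a b. a < b}"

definition QRl :: "real set set" where
  "QRl = {K. K \<noteq> {} \<and> compactin sorgenfrey K}"

definition QRl_le :: "real set \<Rightarrow> real set \<Rightarrow> bool" where
  "QRl_le K L \<longleftrightarrow> L \<subseteq> K"

definition directed_in :: "('a \<Rightarrow> 'a \<Rightarrow> bool) \<Rightarrow> 'a set \<Rightarrow> bool" where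
  "directed_in le D \<longleftrightarrow> D \<noteq> {} \<and> (\<forall>x\<in>D. \<forall>y\<in>D. \<exists>z\<in>D. le x z \<and> le y z)"

definition is_lub_in :: "'a set \<Rightarrow> ('a \<Rightarrow> 'a \<Rightarrow> bool) \<Rightarrow> 'a set \<Rightarrow> 'a \<Rightarrow> bool" where
  "is_lub_in P le D s \<longleftrightarrow> s \<in> P \<and> (\<forall>d\<in>D. le d s) \<and> (\<forall>u\<in>P. (\<forall>d\<in>D. le d u) \<longrightarrow> le s u)"

definition scott_open :: "'a set \<Rightarrow> ('a \<Rightarrow> 'a \<Rightarrow> bool) \<Rightarrow> 'a set \<Rightarrow> bool" where
  "scott_open P le U \<longleftrightarrow> U \<subseteq> P
     \<and> (\<forall>x\<in>U. \<forall>y\<in>P. le x y \<longrightarrow> y \<in> U)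
     \<and> (\<forall>D s. D \<subseteq> P \<and> directed_in le D \<and> is_lub_in P le D s \<and> s \<in> U \<longrightarrow> D \<inter> U \<noteq> {})"

lemma istopology_scott_open: "istopology (scott_open P le)"
  unfolding istopology_def
proof (intro conjI allI impI)
  fix S T assume S: "scott_open P le S" and T: "scott_open P le T"
  have S1: "S \<subseteq> P" and S2: "\<And>x y. x \<in> S \<Longrightarrow> y \<in> P \<Longrightarrow> le x y \<Longrightarrow> y \<in> S"
    and S3: "\<And>D s. D \<subseteq> P \<Longrightarrow> directed_in le D \<Longrightarrow> is_lub_in P le D s \<Longrightarrow> s \<in> S \<Longrightarrow> D \<inter> S \<noteq> {}"
    using S unfolding scott_open_def by auto
  have T1: "T \<subseteq> P" and T2: "\<And>x y. x \<in> T \<Longrightarrow> y \<in> P \<Longrightarrow> le x y \<Longrightarrow> y \<in> T"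
    and T3: "\<And>D s. D \<subseteq> P \<Longrightarrow> directed_in le D \<Longrightarrow> is_lub_in P le D s \<Longrightarrow> s \<in> T \<Longrightarrow> D \<inter> T \<noteq> {}"
    using T unfolding scott_open_def by auto
  have "D \<inter> (S \<inter> T) \<noteq> {}" if H: "D \<subseteq> P" "directed_in le D" "is_lub_in P le D s" "s \<in> S \<inter> T" for D s
  proof -
    obtain d1 where d1: "d1 \<in> D" "d1 \<in> S" using S3[OF H(1-3)] H(4) by auto
    obtain d2 where d2: "d2 \<in> D" "d2 \<in> T" using T3[OF H(1-3)] H(4) by auto
    obtain z where z: "z \<in> D" "le d1 z" "le d2 z" using H(2) d1(1) d2(1) unfolding directed_in_def by meson
    have zP: "z \<in> P" using z(1) H(1) by auto
    have "z \<in> S" using S2[OF d1(2) zP z(2)] .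
    moreover have "z \<in> T" using T2[OF d2(2) zP z(3)] .
    ultimately show ?thesis using z(1) by auto
  qed
  then show "scott_open P le (S \<inter> T)"
    unfolding scott_open_def using S1 S2 T2 by blast
next
  fix K assume K: "\<forall>U\<in>K. scott_open P le U"
  have "D \<inter> \<Union>K \<noteq> {}" if H: "D \<subseteq> P" "directed_in le D" "is_lub_in P le D s" "s \<in> \<Union>K" for D s
  proof -
    obtain U where U: "U \<in> K" "s \<in> U" using H(4) by auto
    have "scott_open P le U" using K U(1) by blast
    then have "D \<inter> U \<noteq> {}" using U(2) H(1-3) unfolding scott_open_def by blast
    then show ?thesis using U(1) by auto
  qed
  moreover have "\<Union>K \<subseteq> P" using K unfolding scott_open_def by blast
  moreover have "y \<in> \<Union>K" if xy: "x \<in> \<Union>K" "y \<in> P" "le x y" for x y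
  proof -
    obtain U where U: "U \<in> K" "x \<in> U" using xy(1) by blast
    have "scott_open P le U" using K U(1) by blast
    then have "y \<in> U" using U(2) xy(2,3) unfolding scott_open_def by blast
    then show ?thesis using U(1) by blast
  qed
  ultimately show "scott_open P le (\<Union>K)" unfolding scott_open_def by blast
qed

definition scott_topology :: "'a set \<Rightarrow> ('a \<Rightarrow> 'a \<Rightarrow> bool) \<Rightarrow> 'a topology" where
  "scott_topology P le = topology (scott_open P le)"

lemma openin_scott_topology: "openin (scott_topology P le) U \<longleftrightarrow> scott_open P le U"
  unfolding scott_topology_def by (simp add: topology_inverse'[OF istopology_scott_open])

definition irreducible_closed :: "'a topology \<Rightarrow> 'a set \<Rightarrow> bool" where
  "irreducible_closed X F \<longleftrightarrow> closedin X F \<and> F \<noteq> {}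
     \<and> (\<forall>A B. closedin X A \<and> closedin X B \<and> F \<subseteq> A \<union> B \<longrightarrow> F \<subseteq> A \<or> F \<subseteq> B)"

definition sober :: "'a topology \<Rightarrow> bool" where
  "sober X \<longleftrightarrow> (\<forall>F. irreducible_closed X F \<longrightarrow> (\<exists>!x. x \<in> topspace X \<and> F = X closure_of {x}))"

end

theory Submission
  imports Defs
begin

text \<open>
  Directed suprema in \<open>Q(\<real>\<^sub>l)\<close> are intersections, because compact subsets of the Hausdorff
  space \<open>\<real>\<^sub>l\<close> are closed. Hence a Scott-closed set \<open>F\<close> is closed under supersets and under
  directed intersections, and Zorn's lemma provides an inclusion-minimal \<open>K \<in> F\<close>. If \<open>F\<close> is
  irreducible, \<open>K\<close> is even the least member of \<open>F\<close>, so \<open>F\<close> is the closure of \<open>{K}\<close>. Otherwise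
  some \<open>x \<in> K\<close> is missing from some \<open>L \<in> F\<close>, and some clopen interval \<open>I = [x, x + e[\<close> misses \<open>L\<close>.
  Irreducibility, applied to the Scott-open boxes of \<open>W \<union> I\<close> and \<open>- I\<close>, puts a member of \<open>F\<close> inside
  every open \<open>W \<supseteq> K - I\<close>. But a Scott-closed set with members inside every neighbourhood of a
  compact \<open>Q\<close> contains \<open>Q\<close>: choosing \<open>L\<^sub>n \<in> F\<close> within distance \<open>1/(n+1)\<close> to the right of \<open>Q\<close>,
  the compact sets \<open>Q \<union> (\<Union>m\<ge>n. L\<^sub>m)\<close> belong to \<open>F\<close> and decrease to \<open>Q\<close>. So \<open>K - I \<in> F\<close>,
  contradicting the minimality of \<open>K\<close>.
\<close>

section \<open>Directed families, compactness and irreducibility\<close>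

lemma directed_in_finite_upper_bound:
  assumes "transp le" "directed_in le D" "finite E" "E \<subseteq> D"
  shows "\<exists>z\<in>D. \<forall>x\<in>E. le x z"
  using assms(3,4)
proof (induction E rule: finite_induct)
  case empty
  then show ?case using assms(2) by (auto simp: directed_in_def)
next
  case (insert a E)
  then obtain z where z: "z \<in> D" "\<forall>x\<in>E. le x z" by auto
  have "a \<in> D" using insert.prems by blast
  then obtain w where w: "w \<in> D" "le z w" "le a w"
    using assms(2) z(1) unfolding directed_in_def by blast
  have "\<forall>x\<in>insert a E. le x w"
    using z(2) w(2,3) transpD[OF assms(1)] by blast
  with w(1) show ?case by blast
qed

lemma directed_in_subset_chain:
  assumes "subset.chain \<A> \<C>" "\<C> \<noteq> {}"
  shows "directed_in (\<supseteq>) \<C>"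
  unfolding directed_in_def
proof (intro conjI ballI)
  fix A B assume "A \<in> \<C>" "B \<in> \<C>"
  then consider "A \<subseteq> B" | "B \<subseteq> A" using assms(1) by (auto simp: subset_chain_def)
  then show "\<exists>C\<in>\<C>. A \<supseteq> C \<and> B \<supseteq> C"
    by cases (use \<open>A \<in> \<C>\<close> \<open>B \<in> \<C>\<close> in auto)
qed (rule assms(2))

lemma directed_in_range_decseq:
  assumes "decseq E"
  shows "directed_in (\<supseteq>) (range E)"
  unfolding directed_in_def
proof (intro conjI ballI)
  fix A B assume "A \<in> range E" "B \<in> range E"
  then obtain i j where "A = E i" "B = E j" by blast
  then have "E (max i j) \<subseteq> A" "E (max i j) \<subseteq> B"
    using decseqD[OF assms] by simp_all
  then show "\<exists>C\<in>range E. A \<supseteq> C \<and> B \<supseteq> C" by blast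
qed simp

lemma subset_Zorn_nonempty_Inter:
  assumes "\<A> \<noteq> {}" and ch: "\<And>\<C>. \<C> \<noteq> {} \<Longrightarrow> subset.chain \<A> \<C> \<Longrightarrow> \<Inter>\<C> \<in> \<A>"
  shows "\<exists>M\<in>\<A>. \<forall>X\<in>\<A>. X \<subseteq> M \<longrightarrow> X = M"
proof -
  have "\<exists>M\<in>uminus ` \<A>. \<forall>X\<in>uminus ` \<A>. M \<subseteq> X \<longrightarrow> X = M"
  proof (rule subset_Zorn_nonempty)
    fix \<C> assume "\<C> \<noteq> {}" "subset.chain (uminus ` \<A>) \<C>"
    then have "uminus ` \<C> \<noteq> {}" "subset.chain \<A> (uminus ` \<C>)"
      by (auto simp: subset_chain_def)
    then have "\<Inter>(uminus ` \<C>) \<in> \<A>" by (rule ch)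
    moreover have "\<Union>\<C> = - \<Inter>(uminus ` \<C>)" by simp
    ultimately show "\<Union>\<C> \<in> uminus ` \<A>" by (rule rev_image_eqI)
  qed (use assms(1) in simp)
  then obtain M where M: "M \<in> \<A>" "\<forall>X\<in>uminus ` \<A>. - M \<subseteq> X \<longrightarrow> X = - M"
    by blast
  have "X = M" if "X \<in> \<A>" "X \<subseteq> M" for X
  proof -
    have "- X \<in> uminus ` \<A>" using that(1) by (rule imageI)
    moreover have "- M \<subseteq> - X" using that(2) by blast
    ultimately have "- X = - M" using M(2) by blast
    then show "X = M" by simp
  qed
  with M(1) show ?thesis by blast
qed

lemma compactin_finite_subcover_image:
  assumes S: "compactin X S" and U: "\<And>i. i \<in> I \<Longrightarrow> openin X (U i)"
    and cover: "S \<subseteq> (\<Union>i\<in>I. U i)"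
  shows "\<exists>J\<subseteq>I. finite J \<and> S \<subseteq> (\<Union>i\<in>J. U i)"
proof -
  have "\<exists>\<F>. finite \<F> \<and> \<F> \<subseteq> U ` I \<and> S \<subseteq> \<Union>\<F>"
    using U cover by (intro compactinD[OF S]) auto
  then obtain \<F> where "finite \<F>" "\<F> \<subseteq> U ` I" "S \<subseteq> \<Union>\<F>" by blast
  then show ?thesis using finite_subset_image[of \<F> U I] by blast
qed

lemma Hausdorff_compactin_directed_Inter_subset:
  assumes X: "Hausdorff_space X"
    and D: "directed_in (\<supseteq>) D" "\<And>K. K \<in> D \<Longrightarrow> compactin X K"
    and W: "openin X W" "\<Inter>D \<subseteq> W"
  shows "\<exists>K\<in>D. K \<subseteq> W"
proof -
  obtain K0 where K0: "K0 \<in> D" using D(1) unfolding directed_in_def by auto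
  have "K0 \<subseteq> topspace X" using D(2)[OF K0] by (rule compactin_subset_topspace)
  then have "K0 - W = K0 \<inter> (topspace X - W)" by blast
  then have "compactin X (K0 - W)"
    using compact_Int_closedin[OF D(2)[OF K0]] W(1) by (simp add: closedin_diff)
  moreover have "openin X (topspace X - K)" if "K \<in> D" for K
    using compactin_imp_closedin[OF X D(2)[OF that]] by (simp add: openin_diff)
  moreover have "K0 - W \<subseteq> (\<Union>K\<in>D. topspace X - K)"
    using W(2) \<open>K0 \<subseteq> topspace X\<close> by blast
  ultimately have "\<exists>E\<subseteq>D. finite E \<and> K0 - W \<subseteq> (\<Union>K\<in>E. topspace X - K)"
    by (rule compactin_finite_subcover_image)
  then obtain E where E: "E \<subseteq> D" "finite E" "K0 - W \<subseteq> (\<Union>K\<in>E. topspace X - K)" by blast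
  have "transp (\<supseteq>)" by (auto simp: transp_def)
  moreover have "finite (insert K0 E)" "insert K0 E \<subseteq> D" using E(1,2) K0 by auto
  ultimately have "\<exists>K\<in>D. \<forall>A\<in>insert K0 E. K \<subseteq> A"
    by (rule directed_in_finite_upper_bound[OF _ D(1)])
  then obtain K where K: "K \<in> D" "K \<subseteq> K0" "\<And>A. A \<in> E \<Longrightarrow> K \<subseteq> A" by blast
  have "K \<subseteq> W"
  proof
    fix x assume "x \<in> K"
    then have "x \<in> K0" "x \<notin> (\<Union>A\<in>E. topspace X - A)" using K(2,3) by auto
    then show "x \<in> W" using E(3) by blast
  qed
  with K(1) show ?thesis by blast
qed

lemma Hausdorff_compactin_directed_Inter:
  assumes X: "Hausdorff_space X"
    and D: "directed_in (\<supseteq>) D" "\<And>K. K \<in> D \<Longrightarrow> compactin X K" and nonempty: "{} \<notin> D"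
  shows "compactin X (\<Inter>D)" "\<Inter>D \<noteq> {}"
proof -
  obtain K0 where K0: "K0 \<in> D" using D(1) unfolding directed_in_def by auto
  show "compactin X (\<Inter>D)"
    using closed_compactin_Inter[OF D(2)[OF K0] K0] compactin_imp_closedin[OF X D(2)] by blast
  show "\<Inter>D \<noteq> {}"
    using Hausdorff_compactin_directed_Inter_subset[OF X D openin_empty] nonempty by auto
qed

text \<open>Convergence of a sequence of sets to \<open>Q\<close> in the upper Vietoris topology.\<close>
definition converges_upper :: "'a topology \<Rightarrow> (nat \<Rightarrow> 'a set) \<Rightarrow> 'a set \<Rightarrow> bool" where
  "converges_upper X L Q \<longleftrightarrow>
     (\<forall>W. openin X W \<and> Q \<subseteq> W \<longrightarrow> (\<forall>\<^sub>F m in sequentially. L m \<subseteq> W))"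

lemma compactin_Un_convergent_tail:
  fixes L :: "nat \<Rightarrow> 'a set"
  assumes Q: "compactin X Q" and L: "\<And>m. compactin X (L m)"
    and conv: "converges_upper X L Q"
  shows "compactin X (Q \<union> (\<Union>m\<in>{n..}. L m))"
  unfolding compactin_def
proof (intro conjI allI impI)
  show "Q \<union> (\<Union>m\<in>{n..}. L m) \<subseteq> topspace X"
    using Q L compactin_subset_topspace by blast
  fix \<U> assume "(\<forall>U\<in>\<U>. openin X U) \<and> Q \<union> (\<Union>m\<in>{n..}. L m) \<subseteq> \<Union>\<U>"
  then have opens: "\<And>U. U \<in> \<U> \<Longrightarrow> openin X U"
    and cover_Q: "Q \<subseteq> \<Union>\<U>" and cover_L: "(\<Union>m\<in>{n..}. L m) \<subseteq> \<Union>\<U>" by auto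
  have "\<exists>\<F>. finite \<F> \<and> \<F> \<subseteq> \<U> \<and> Q \<subseteq> \<Union>\<F>"
    by (rule compactinD[OF Q opens cover_Q])
  then obtain \<F> where \<F>: "finite \<F>" "\<F> \<subseteq> \<U>" "Q \<subseteq> \<Union>\<F>" by blast
  have "openin X (\<Union>\<F>)" using \<F>(2) opens by (intro openin_Union) blast
  then obtain k where k: "\<And>m. m \<ge> k \<Longrightarrow> L m \<subseteq> \<Union>\<F>"
    using conv \<F>(3) unfolding converges_upper_def eventually_sequentially by blast
  have "(\<Union>m\<in>{n..<k}. L m) \<subseteq> (\<Union>m\<in>{n..}. L m)" by (intro UN_mono) auto
  then have cover_head: "(\<Union>m\<in>{n..<k}. L m) \<subseteq> \<Union>\<U>" using cover_L by (rule subset_trans)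
  have "compactin X (\<Union>m\<in>{n..<k}. L m)"
    using L by (intro compactin_Union) auto
  then have "\<exists>\<G>. finite \<G> \<and> \<G> \<subseteq> \<U> \<and> (\<Union>m\<in>{n..<k}. L m) \<subseteq> \<Union>\<G>"
    using opens cover_head by (rule compactinD)
  then obtain \<G> where \<G>: "finite \<G>" "\<G> \<subseteq> \<U>" "(\<Union>m\<in>{n..<k}. L m) \<subseteq> \<Union>\<G>" by blast
  have "L m \<subseteq> \<Union>(\<F> \<union> \<G>)" if "m \<ge> n" for m
  proof (cases "m < k")
    case True
    then have "L m \<subseteq> (\<Union>m\<in>{n..<k}. L m)" using that by (intro UN_upper) auto
    with \<G>(3) show ?thesis by blast
  next
    case False
    then show ?thesis using k[of m] by auto
  qed
  then have "Q \<union> (\<Union>m\<in>{n..}. L m) \<subseteq> \<Union>(\<F> \<union> \<G>)" using \<F>(3) by auto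
  then show "\<exists>\<F>. finite \<F> \<and> \<F> \<subseteq> \<U> \<and> Q \<union> (\<Union>m\<in>{n..}. L m) \<subseteq> \<Union>\<F>"
    using \<F>(1,2) \<G>(1,2) by (intro exI[of _ "\<F> \<union> \<G>"]) auto
qed

lemma Inter_Un_convergent_tails:
  fixes L :: "nat \<Rightarrow> 'a set"
  assumes X: "t1_space X" and Q: "Q \<subseteq> topspace X" and conv: "converges_upper X L Q"
  shows "(\<Inter>n. Q \<union> (\<Union>m\<in>{n..}. L m)) = Q"
proof
  show "(\<Inter>n. Q \<union> (\<Union>m\<in>{n..}. L m)) \<subseteq> Q"
  proof
    fix x assume x: "x \<in> (\<Inter>n. Q \<union> (\<Union>m\<in>{n..}. L m))"
    show "x \<in> Q"
    proof (rule ccontr)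
      assume "x \<notin> Q"
      moreover have "openin X (topspace X - {x})"
        using X by (simp add: t1_space_openin_delete_alt)
      ultimately obtain k where k: "\<And>m. m \<ge> k \<Longrightarrow> L m \<subseteq> topspace X - {x}"
        using Q conv unfolding converges_upper_def eventually_sequentially by blast
      have "x \<in> Q \<union> (\<Union>m\<in>{k..}. L m)" using x by blast
      then show False using k \<open>x \<notin> Q\<close> by auto
    qed
  qed
qed blast

lemma irreducible_closed_Int_open:
  assumes F: "irreducible_closed X F" and U: "openin X U" "F \<inter> U \<noteq> {}"
    and V: "openin X V" "F \<inter> V \<noteq> {}"
  shows "F \<inter> U \<inter> V \<noteq> {}"
proof
  assume "F \<inter> U \<inter> V = {}"
  moreover have "F \<subseteq> topspace X" using F closedin_subset unfolding irreducible_closed_def by blast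
  ultimately have "F \<subseteq> (topspace X - U) \<union> (topspace X - V)" by blast
  moreover have "closedin X (topspace X - U)" "closedin X (topspace X - V)"
    using U(1) V(1) by (simp_all add: closedin_diff)
  ultimately have "F \<subseteq> topspace X - U \<or> F \<subseteq> topspace X - V"
    using F unfolding irreducible_closed_def by blast
  then show False using U(2) V(2) by blast
qed

section \<open>Scott topology\<close>

lemma topspace_scott_topology [simp]: "topspace (scott_topology P le) = P"
proof -
  have "openin (scott_topology P le) P"
    by (auto simp: openin_scott_topology scott_open_def directed_in_def)
  then have "P \<subseteq> topspace (scott_topology P le)" by (rule openin_subset)
  moreover have "topspace (scott_topology P le) \<subseteq> P"
    using openin_topspace[of "scott_topology P le"]
    unfolding openin_scott_topology scott_open_def by (rule conjunct1)
  ultimately show ?thesis by blast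
qed

lemma closedin_scott_topology:
  "closedin (scott_topology P le) F \<longleftrightarrow>
     F \<subseteq> P \<and> (\<forall>x\<in>P. \<forall>y\<in>F. le x y \<longrightarrow> x \<in> F)
       \<and> (\<forall>D s. D \<subseteq> F \<and> directed_in le D \<and> is_lub_in P le D s \<longrightarrow> s \<in> F)"
  (is "_ \<longleftrightarrow> _ \<and> ?down \<and> ?lubs")
proof -
  have "scott_open P le (P - F) \<longleftrightarrow> ?down \<and> ?lubs" if "F \<subseteq> P"
  proof -
    have "(\<forall>x\<in>P - F. \<forall>y\<in>P. le x y \<longrightarrow> y \<in> P - F) \<longleftrightarrow> ?down"
      using that by blast
    moreover have "(\<forall>D s. D \<subseteq> P \<and> directed_in le D \<and> is_lub_in P le D s \<and> s \<in> P - F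
                     \<longrightarrow> D \<inter> (P - F) \<noteq> {}) \<longleftrightarrow> ?lubs"
    proof (intro iffI allI impI)
      fix D s
      assume open_lubs: "\<forall>D s. D \<subseteq> P \<and> directed_in le D \<and> is_lub_in P le D s \<and> s \<in> P - F
                           \<longrightarrow> D \<inter> (P - F) \<noteq> {}"
        and D: "D \<subseteq> F \<and> directed_in le D \<and> is_lub_in P le D s"
      then have "s \<in> P" "D \<subseteq> P" using that by (auto simp: is_lub_in_def)
      then show "s \<in> F" using open_lubs D by blast
    next
      fix D s
      assume ?lubs and D: "D \<subseteq> P \<and> directed_in le D \<and> is_lub_in P le D s \<and> s \<in> P - F"
      then show "D \<inter> (P - F) \<noteq> {}" by blast
    qed
    ultimately show ?thesis unfolding scott_open_def by blast
  qed
  then show ?thesis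
    unfolding closedin_def topspace_scott_topology openin_scott_topology by blast
qed

lemma closedin_scott_topologyD:
  assumes "closedin (scott_topology P le) F"
  shows "F \<subseteq> P" and "\<And>x y. x \<in> P \<Longrightarrow> y \<in> F \<Longrightarrow> le x y \<Longrightarrow> x \<in> F"
    and "\<And>D s. D \<subseteq> F \<Longrightarrow> directed_in le D \<Longrightarrow> is_lub_in P le D s \<Longrightarrow> s \<in> F"
  using assms unfolding closedin_scott_topology by blast+

lemma scott_closure_of_singleton:
  assumes "reflp_on P le" "transp_on P le" "x \<in> P"
  shows "scott_topology P le closure_of {x} = {y\<in>P. le y x}"
proof
  have "closedin (scott_topology P le) {y\<in>P. le y x}"
    unfolding closedin_scott_topology
  proof (intro conjI allI impI ballI)
    fix a b assume "a \<in> P" "b \<in> {y\<in>P. le y x}" "le a b"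
    then show "a \<in> {y\<in>P. le y x}" using assms(2,3) unfolding transp_on_def by blast
  next
    fix D s assume "D \<subseteq> {y\<in>P. le y x} \<and> directed_in le D \<and> is_lub_in P le D s"
    then show "s \<in> {y\<in>P. le y x}" using assms(3) unfolding is_lub_in_def by blast
  qed blast
  moreover have "{x} \<subseteq> {y\<in>P. le y x}" using assms(1,3) unfolding reflp_on_def by blast
  ultimately show "scott_topology P le closure_of {x} \<subseteq> {y\<in>P. le y x}"
    by (rule closure_of_minimal[rotated])
next
  show "{y\<in>P. le y x} \<subseteq> scott_topology P le closure_of {x}"
    using assms(3) by (auto simp: in_closure_of openin_scott_topology scott_open_def)
qed

lemma sober_scott_topologyI:
  assumes refl: "reflp_on P le" and trans: "transp_on P le" and antisym: "antisymp_on P le"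
    and greatest: "\<And>F. irreducible_closed (scott_topology P le) F \<Longrightarrow> \<exists>x\<in>F. \<forall>y\<in>F. le y x"
  shows "sober (scott_topology P le)"
  unfolding sober_def
proof (intro allI impI)
  fix F assume F: "irreducible_closed (scott_topology P le) F"
  then have "closedin (scott_topology P le) F" by (simp add: irreducible_closed_def)
  note FP = closedin_scott_topologyD(1)[OF this] and down = closedin_scott_topologyD(2)[OF this]
  obtain x where x: "x \<in> F" "\<And>y. y \<in> F \<Longrightarrow> le y x" using greatest[OF F] by blast
  have down_x: "F = {y\<in>P. le y x}" using FP down x by blast
  then have F_closure: "F = scott_topology P le closure_of {x}"
    using scott_closure_of_singleton[OF refl trans] x(1) FP by blast
  show "\<exists>!x. x \<in> topspace (scott_topology P le) \<and> F = scott_topology P le closure_of {x}"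
  proof (rule ex1I)
    show "x \<in> topspace (scott_topology P le) \<and> F = scott_topology P le closure_of {x}"
      using x(1) FP F_closure by auto
  next
    fix x' assume x': "x' \<in> topspace (scott_topology P le) \<and> F = scott_topology P le closure_of {x'}"
    then have "x' \<in> P" "F = {y\<in>P. le y x'}" using scott_closure_of_singleton[OF refl trans] by auto
    moreover have "le x' x'" using \<open>x' \<in> P\<close> refl unfolding reflp_on_def by blast
    ultimately have "le x x'" "le x' x" using x down_x by blast+
    then show "x' = x" using antisym \<open>x' \<in> P\<close> x(1) FP unfolding antisymp_on_def by blast
  qed
qed

section \<open>The Sorgenfrey line\<close>

lemma openin_sorgenfrey:
  "openin sorgenfrey U \<longleftrightarrow> (\<forall>x\<in>U. \<exists>e>0. {x..<x+e} \<subseteq> U)"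
proof
  assume "openin sorgenfrey U"
  then have "generate_topology_on {{a..<b} | a b. a < b} U"
    unfolding sorgenfrey_def by (rule openin_topology_generated_by)
  then show "\<forall>x\<in>U. \<exists>e>0. {x..<x+e} \<subseteq> U"
  proof (induction rule: generate_topology_on.induct)
    case (Int U V)
    show ?case
    proof
      fix x assume "x \<in> U \<inter> V"
      then obtain d e where de: "d > 0" "{x..<x+d} \<subseteq> U" "e > 0" "{x..<x+e} \<subseteq> V"
        using Int.IH by blast
      have "{x..<x + min d e} \<subseteq> {x..<x+d}" "{x..<x + min d e} \<subseteq> {x..<x+e}" by auto
      with de show "\<exists>e>0. {x..<x+e} \<subseteq> U \<inter> V"
        by (intro exI[of _ "min d e"] conjI) (simp, blast)
    qed
  next
    case (UN \<U>)
    then show ?case by (meson UnionE Union_upper order_trans)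
  next
    case (Basis I)
    then obtain a b where "I = {a..<b}" by blast
    then show ?case by (auto intro!: exI[of _ "b - _"])
  qed simp
next
  assume "\<forall>x\<in>U. \<exists>e>0. {x..<x+e} \<subseteq> U"
  then obtain e where e: "\<And>x. x \<in> U \<Longrightarrow> e x > 0 \<and> {x..<x + e x} \<subseteq> U" by metis
  then have "U = (\<Union>x\<in>U. {x..<x + e x})"
    by fastforce
  moreover have "generate_topology_on {{a..<b} | a b. a < b} (\<Union>x\<in>U. {x..<x + e x})"
    using e by (intro generate_topology_on.UN generate_topology_on.Basis) fastforce
  ultimately show "openin sorgenfrey U"
    unfolding sorgenfrey_def openin_topology_generated_by_iff by simp
qed

lemma topspace_sorgenfrey [simp]: "topspace sorgenfrey = UNIV"
  using openin_sorgenfrey[of UNIV] openin_subset[of sorgenfrey UNIV] by (auto intro: zero_less_one)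

lemma openin_sorgenfrey_atLeastLessThan [simp]: "openin sorgenfrey {a..<b}"
  unfolding openin_sorgenfrey by (intro ballI exI[of _ "b - _"]) auto

lemma openin_sorgenfrey_Compl_atLeastLessThan [simp]: "openin sorgenfrey (- {a..<b})"
  unfolding openin_sorgenfrey
proof
  fix x :: real assume "x \<in> - {a..<b}"
  then consider "x < a" | "b \<le> x" by fastforce
  then show "\<exists>e>0. {x..<x+e} \<subseteq> - {a..<b}"
  proof cases
    case 1
    then show ?thesis by (intro exI[of _ "a - x"]) auto
  next
    case 2
    then show ?thesis by (intro exI[of _ 1]) auto
  qed
qed

lemma Hausdorff_space_sorgenfrey: "Hausdorff_space sorgenfrey"
  unfolding Hausdorff_space_def
proof (intro allI impI)
  fix x y :: real assume "x \<in> topspace sorgenfrey \<and> y \<in> topspace sorgenfrey \<and> x \<noteq> y"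
  then consider "x < y" | "y < x" by fastforce
  then show "\<exists>U V. openin sorgenfrey U \<and> openin sorgenfrey V \<and> x \<in> U \<and> y \<in> V \<and> disjnt U V"
  proof cases
    case 1
    then show ?thesis by (intro exI[of _ "{x..<y}"] exI[of _ "{y..<y+1}"]) (auto simp: disjnt_def)
  next
    case 2
    then show ?thesis by (intro exI[of _ "{x..<x+1}"] exI[of _ "{y..<x}"]) (auto simp: disjnt_def)
  qed
qed

lemma openin_sorgenfrey_Compl_compactin:
  "compactin sorgenfrey K \<Longrightarrow> openin sorgenfrey (- K)"
  using compactin_imp_closedin[OF Hausdorff_space_sorgenfrey] by (simp add: closedin_def Compl_eq_Diff_UNIV)

lemma sorgenfrey_Lebesgue_number:
  assumes Q: "compactin sorgenfrey Q" and W: "openin sorgenfrey W" "Q \<subseteq> W"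
  shows "\<exists>e>0. \<forall>y\<in>Q. {y..<y+e} \<subseteq> W"
proof -
  have "\<forall>y\<in>Q. \<exists>d>0. {y..<y+d} \<subseteq> W" using W by (auto simp: openin_sorgenfrey)
  then obtain d where d: "\<And>y. y \<in> Q \<Longrightarrow> d y > 0 \<and> {y..<y + d y} \<subseteq> W" by metis
  have "Q \<subseteq> (\<Union>y\<in>Q. {y..<y + d y / 2})" using d by force
  then have "\<exists>Y\<subseteq>Q. finite Y \<and> Q \<subseteq> (\<Union>y\<in>Y. {y..<y + d y / 2})"
    by (intro compactin_finite_subcover_image[OF Q]) auto
  then obtain Y where Y: "Y \<subseteq> Q" "finite Y" "Q \<subseteq> (\<Union>y\<in>Y. {y..<y + d y / 2})" by blast
  define e where "e = Min (insert 1 ((\<lambda>y. d y / 2) ` Y))"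
    \<comment> \<open>the \<open>1\<close> only keeps the minimum meaningful when \<open>Q = {}\<close>\<close>
  have "e > 0" using Y d by (auto simp: e_def)
  have "{z..<z+e} \<subseteq> W" if "z \<in> Q" for z
  proof -
    have "z \<in> (\<Union>y\<in>Y. {y..<y + d y / 2})" using Y(3) that by blast
    then obtain y where y: "y \<in> Y" "y \<le> z" "z < y + d y / 2" by auto
    then have "e \<le> d y / 2" unfolding e_def using Y(2) by (intro Min_le) auto
    then have "{z..<z+e} \<subseteq> {y..<y + d y}" using y by auto
    then show ?thesis using d y Y(1) by blast
  qed
  then show ?thesis using \<open>e > 0\<close> by blast
qed

lemma sorgenfrey_converges_upper:
  assumes Q: "compactin sorgenfrey Q" and L: "\<And>n. L n \<subseteq> (\<Union>y\<in>Q. {y..<y + 1 / Suc n})"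
  shows "converges_upper sorgenfrey L Q"
  unfolding converges_upper_def eventually_sequentially
proof (intro allI impI)
  fix W assume W: "openin sorgenfrey W \<and> Q \<subseteq> W"
  then obtain e where "e > 0" and e: "\<forall>y\<in>Q. {y..<y+e} \<subseteq> W"
    using sorgenfrey_Lebesgue_number[OF Q] by blast
  then obtain k where k: "1 / Suc k < e"
    using reals_Archimedean[OF \<open>e > 0\<close>] unfolding inverse_eq_divide by blast
  have "L m \<subseteq> W" if "m \<ge> k" for m
  proof -
    have "1 / Suc m \<le> 1 / Suc k" using that by (simp add: frac_le)
    then have "(\<Union>y\<in>Q. {y..<y + 1 / Suc m}) \<subseteq> W" using k e by fastforce
    then show ?thesis using L by blast
  qed
  then show "\<exists>k. \<forall>m\<ge>k. L m \<subseteq> W" by blast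
qed

section \<open>Compact subsets of the Sorgenfrey line with the Scott topology\<close>

abbreviation scott_QRl :: "real set topology" where
  "scott_QRl \<equiv> scott_topology QRl (\<supseteq>)"

lemma QRl_le_eq: "QRl_le = (\<supseteq>)"
  by (auto simp: QRl_le_def fun_eq_iff)

lemma Inter_in_QRl:
  assumes "D \<subseteq> QRl" "directed_in (\<supseteq>) D"
  shows "\<Inter>D \<in> QRl"
proof -
  have "\<And>K. K \<in> D \<Longrightarrow> compactin sorgenfrey K" "{} \<notin> D" using assms(1) by (auto simp: QRl_def)
  then show ?thesis
    using Hausdorff_compactin_directed_Inter[OF Hausdorff_space_sorgenfrey assms(2)] by (simp add: QRl_def)
qed

lemma is_lub_in_QRl_iff:
  assumes "D \<subseteq> QRl" "directed_in (\<supseteq>) D"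
  shows "is_lub_in QRl (\<supseteq>) D s \<longleftrightarrow> s = \<Inter>D"
proof
  assume s: "is_lub_in QRl (\<supseteq>) D s"
  then have "s \<subseteq> \<Inter>D" by (auto simp: is_lub_in_def)
  moreover have "\<Inter>D \<subseteq> s"
    using s Inter_in_QRl[OF assms] Inter_lower unfolding is_lub_in_def by blast
  ultimately show "s = \<Inter>D" by blast
next
  assume "s = \<Inter>D"
  then show "is_lub_in QRl (\<supseteq>) D s"
    using Inter_in_QRl[OF assms] by (auto simp: is_lub_in_def)
qed

lemma openin_scott_QRl_box:
  assumes W: "openin sorgenfrey W"
  shows "openin scott_QRl {K\<in>QRl. K \<subseteq> W}"
  unfolding openin_scott_topology scott_open_def
proof (intro conjI allI impI ballI)
  fix D s assume H: "D \<subseteq> QRl \<and> directed_in (\<supseteq>) D \<and> is_lub_in QRl (\<supseteq>) D s \<and> s \<in> {K\<in>QRl. K \<subseteq> W}"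
  then have "\<Inter>D \<subseteq> W" using is_lub_in_QRl_iff by blast
  moreover have "\<And>K. K \<in> D \<Longrightarrow> compactin sorgenfrey K" using H by (auto simp: QRl_def)
  ultimately obtain K where "K \<in> D" "K \<subseteq> W"
    using Hausdorff_compactin_directed_Inter_subset[OF Hausdorff_space_sorgenfrey _ _ W] H by blast
  then show "D \<inter> {K\<in>QRl. K \<subseteq> W} \<noteq> {}" using H by blast
qed auto

lemma closedin_scott_QRl_Inter:
  assumes F: "closedin scott_QRl F" and D: "D \<subseteq> F" "directed_in (\<supseteq>) D"
  shows "\<Inter>D \<in> F"
proof -
  have "D \<subseteq> QRl" using closedin_scott_topologyD(1)[OF F] D(1) by blast
  then have "is_lub_in QRl (\<supseteq>) D (\<Inter>D)" using is_lub_in_QRl_iff D(2) by blast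
  then show ?thesis using closedin_scott_topologyD(3)[OF F D] by blast
qed

lemma closedin_scott_QRl_has_minimal:
  assumes F: "closedin scott_QRl F" and "F \<noteq> {}"
  shows "\<exists>K\<in>F. \<forall>L\<in>F. L \<subseteq> K \<longrightarrow> L = K"
proof (rule subset_Zorn_nonempty_Inter[OF \<open>F \<noteq> {}\<close>])
  fix \<C> assume \<C>: "\<C> \<noteq> {}" "subset.chain F \<C>"
  then have "\<C> \<subseteq> F" by (simp add: subset_chain_def)
  moreover have "directed_in (\<supseteq>) \<C>" using \<C> by (rule directed_in_subset_chain[rotated])
  ultimately show "\<Inter>\<C> \<in> F" by (rule closedin_scott_QRl_Inter[OF F])
qed

lemma closedin_scott_QRl_mem_if_boxes_meet:
  assumes F: "closedin scott_QRl F" and Q: "compactin sorgenfrey Q"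
    and meets: "\<And>W. openin sorgenfrey W \<Longrightarrow> Q \<subseteq> W \<Longrightarrow> \<exists>L\<in>F. L \<subseteq> W"
  shows "Q \<in> F"
proof -
  have FQ: "F \<subseteq> QRl" using F by (rule closedin_scott_topologyD(1))
  have "\<forall>n. \<exists>L\<in>F. L \<subseteq> (\<Union>y\<in>Q. {y..<y + 1 / Suc n})"
    by (intro allI meets openin_Union) force+
  then obtain L where L: "\<And>n. L n \<in> F" "\<And>n. L n \<subseteq> (\<Union>y\<in>Q. {y..<y + 1 / Suc n})" by metis
  have compact_L: "compactin sorgenfrey (L n)" and nonempty_L: "L n \<noteq> {}" for n
    using FQ L(1) by (auto simp: QRl_def)
  have conv: "converges_upper sorgenfrey L Q" using Q L(2) by (rule sorgenfrey_converges_upper)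
  define E where "E n = Q \<union> (\<Union>m\<in>{n..}. L m)" for n
  have "E n \<in> F" for n
  proof (rule closedin_scott_topologyD(2)[OF F _ L(1)])
    have "L n \<subseteq> E n" unfolding E_def by auto
    moreover have "compactin sorgenfrey (E n)"
      unfolding E_def using Q compact_L conv by (rule compactin_Un_convergent_tail)
    ultimately show "E n \<in> QRl" "E n \<supseteq> L n" using nonempty_L by (auto simp: QRl_def)
  qed
  moreover have "decseq E" unfolding decseq_def E_def by auto
  moreover have "\<Inter>(range E) = Q"
    unfolding E_def using Hausdorff_imp_t1_space[OF Hausdorff_space_sorgenfrey] _ conv
    by (rule Inter_Un_convergent_tails) simp
  ultimately show ?thesis
    using closedin_scott_QRl_Inter[OF F _ directed_in_range_decseq] by blast
qed

lemma irreducible_scott_QRl_boxes_Int: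
  assumes F: "irreducible_closed scott_QRl F"
    and W1: "openin sorgenfrey W1" "K1 \<in> F" "K1 \<subseteq> W1"
    and W2: "openin sorgenfrey W2" "K2 \<in> F" "K2 \<subseteq> W2"
  shows "\<exists>L\<in>F. L \<subseteq> W1 \<inter> W2"
proof -
  have "closedin scott_QRl F" using F by (simp add: irreducible_closed_def)
  then have "F \<subseteq> QRl" by (rule closedin_scott_topologyD(1))
  then have "F \<inter> {K\<in>QRl. K \<subseteq> W1} \<noteq> {}" "F \<inter> {K\<in>QRl. K \<subseteq> W2} \<noteq> {}"
    using W1 W2 by blast+
  then have "F \<inter> {K\<in>QRl. K \<subseteq> W1} \<inter> {K\<in>QRl. K \<subseteq> W2} \<noteq> {}"
    using irreducible_closed_Int_open[OF F openin_scott_QRl_box[OF W1(1)] _ openin_scott_QRl_box[OF W2(1)]]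
    by blast
  then show ?thesis by blast
qed

lemma irreducible_scott_QRl_minimal_least:
  assumes F: "irreducible_closed scott_QRl F"
    and K: "K \<in> F" "\<forall>L\<in>F. L \<subseteq> K \<longrightarrow> L = K" and L: "L \<in> F"
  shows "K \<subseteq> L"
proof (rule ccontr)
  assume "\<not> K \<subseteq> L"
  then obtain x where x: "x \<in> K" "x \<notin> L" by blast
  have closed: "closedin scott_QRl F" using F by (simp add: irreducible_closed_def)
  then have "F \<subseteq> QRl" by (rule closedin_scott_topologyD(1))
  then have cK: "compactin sorgenfrey K" and cL: "compactin sorgenfrey L"
    using K(1) L by (auto simp: QRl_def)
  have "openin sorgenfrey (- L)" using cL by (rule openin_sorgenfrey_Compl_compactin)
  then have "\<exists>e>0. {x..<x+e} \<subseteq> - L" using x(2) by (auto simp: openin_sorgenfrey)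
  then obtain e where "e > 0" and I_L: "{x..<x+e} \<inter> L = {}" by blast
  define I where "I = {x..<x+e}"
  have I: "openin sorgenfrey I" "openin sorgenfrey (- I)" by (simp_all add: I_def)
  have "K - I \<in> F"
  proof (rule closedin_scott_QRl_mem_if_boxes_meet[OF closed])
    have "closedin sorgenfrey (- I)" using I(1) by (simp add: closedin_def Diff_Compl)
    then show "compactin sorgenfrey (K - I)" using compact_Int_closedin[OF cK] by (simp add: Diff_eq)
  next
    fix W assume W: "openin sorgenfrey W" "K - I \<subseteq> W"
    have "K \<subseteq> W \<union> I" "L \<subseteq> - I" using W(2) I_L by (auto simp: I_def)
    then obtain L' where "L' \<in> F" "L' \<subseteq> (W \<union> I) \<inter> - I"
      using irreducible_scott_QRl_boxes_Int[OF F openin_Un[OF W(1) I(1)] K(1) _ I(2) L] by blast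
    then show "\<exists>L\<in>F. L \<subseteq> W" by blast
  qed
  then have "K - I = K" using K(2) by blast
  moreover have "x \<in> I" using \<open>e > 0\<close> by (simp add: I_def)
  ultimately show False using x(1) by blast
qed

theorem proposition4p23:
  shows "sober (scott_topology QRl QRl_le)"
  unfolding QRl_le_eq
proof (rule sober_scott_topologyI)
  show "reflp_on QRl (\<supseteq>)" "transp_on QRl (\<supseteq>)" "antisymp_on QRl (\<supseteq>)"
    by (auto simp: reflp_on_def transp_on_def antisymp_on_def)
  fix F assume F: "irreducible_closed scott_QRl F"
  then have "closedin scott_QRl F" "F \<noteq> {}" by (simp_all add: irreducible_closed_def)
  then have "\<exists>K\<in>F. \<forall>L\<in>F. L \<subseteq> K \<longrightarrow> L = K" by (rule closedin_scott_QRl_has_minimal)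
  then obtain K where K: "K \<in> F" "\<forall>L\<in>F. L \<subseteq> K \<longrightarrow> L = K" by blast
  then show "\<exists>K\<in>F. \<forall>L\<in>F. L \<supseteq> K"
    using irreducible_scott_QRl_minimal_least[OF F K] by blast
qed

end
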